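(* Let $p$ be a prime number and $d$ a positive integer, and let $i\ge1$ be such that $P_0^{i-1}\le d\le P_0^i$. Then $\tau_p(d)=i+1$ if $d=P_j^i$ for some $j\le i$, and $\tau_p(d)=i$ otherwise. Equivalently, $\tau_p(d)=\lceil\log_p((p-1)d+1)\rceil$ if $d$ is a sum of consecutive powers of $p$, and $\tau_p(d)=\lceil\log_p((p-1)d+1)\rceil-1$ otherwise.
   Context: For non-negative integers $j\le i$, $P_j^i=p^j+p^{j+1}+\dots+p^i=\frac{p^{i+1}-p^j}{p-1}$. A sum of consecutive powers of $p$ means an integer of the form $P_j^i$. For a positive integer $d$, $\tau_p(d)$ is the maximum of $s+\min\{v_p(d_1),\dots,v_p(d_s)\}$ over all partitions $d=d_1+\dots+d_s$ into positive integers with $d_{i+1}\le p^{-1}d_i$ for $i=1,\dots,s-1$, where $v_p$ is the $p$-adic valuation. *)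

theory Defs
  imports Complex_Main "HOL-Computational_Algebra.Primes"
begin

text \<open>P_j^i = p^j + ... + p^i (the sum of consecutive powers of p from j to i).\<close>
definition cpow_sum :: "nat \<Rightarrow> nat \<Rightarrow> nat \<Rightarrow> nat" where
  "cpow_sum p j i = (\<Sum>k=j..i. p ^ k)"

text \<open>Admissible partitions d = d_1 + ... + d_s into positive parts with
  d_(k+1) <= d_k / p, i.e. p * d_(k+1) <= d_k.\<close>
definition adm_partition :: "nat \<Rightarrow> nat \<Rightarrow> nat list \<Rightarrow> bool" where
  "adm_partition p d ds \<longleftrightarrow> ds \<noteq> [] \<and> sum_list ds = d \<and> (\<forall>x\<in>set ds. 0 < x) \<and>
     (\<forall>k. Suc k < length ds \<longrightarrow> p * ds ! Suc k \<le> ds ! k)"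

definition tau :: "nat \<Rightarrow> nat \<Rightarrow> nat" where
  "tau p d = Max {length ds + Min (multiplicity p ` set ds) | ds. adm_partition p d ds}"

end

theory Submission
  imports Defs
begin

text \<open>If p^m divides every part of an admissible partition d = d_1 + ... + d_s, then d_s \<ge> p^m
  and each part is at least p times the next, so d \<ge> P_m^(m+s-1). Together with
  d \<le> P_0^i < p^(i+1) this gives m + s \<le> i + 1; in the extreme case d - P_m^i is a multiple
  of p^m that is at most P_0^i - P_m^i < p^m, so d = P_m^i. Conversely p^i + ... + p^j is an
  admissible partition of P_j^i of value i + 1, and (d - P_0^(i-2)) + p^(i-2) + ... + 1 is one
  of d of value at least i. The logarithmic form follows from
  (p - 1) P_j^i + 1 = p^(i+1) - p^j + 1 \<in> (p^i, p^(i+1)].\<close>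

lemma cpow_sum_geometric:
  assumes "0 < p" "j \<le> i"
  shows "(p - 1) * cpow_sum p j i + p ^ j = p ^ Suc i"
  using assms(2)
proof (induction i)
  case 0
  then show ?case using assms(1) by (simp add: cpow_sum_def)
next
  case (Suc i)
  show ?case
  proof (cases "j = Suc i")
    case True
    then show ?thesis using assms(1) by (simp add: cpow_sum_def algebra_simps)
  next
    case False
    then have "j \<le> i" using Suc.prems by simp
    moreover have "cpow_sum p j (Suc i) = cpow_sum p j i + p ^ Suc i"
      using Suc.prems by (simp add: cpow_sum_def)
    ultimately show ?thesis
      using Suc.IH assms(1) by (cases p) (simp_all add: algebra_simps)
  qed
qed

lemma cpow_sum_less_power:
  assumes "2 \<le> p" "j \<le> i"
  shows "cpow_sum p j i < p ^ Suc i"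
proof -
  have "1 * cpow_sum p j i \<le> (p - 1) * cpow_sum p j i"
    using assms(1) by (intro mult_le_mono1) linarith
  moreover have "0 < p ^ j" using assms(1) by simp
  ultimately show ?thesis using cpow_sum_geometric[of p j i] assms by linarith
qed

lemma power_le_cpow_sum: "j \<le> i \<Longrightarrow> p ^ i \<le> cpow_sum p j i"
  unfolding cpow_sum_def by (rule member_le_sum) auto

lemma power_dvd_cpow_sum: "p ^ j dvd cpow_sum p j i"
  unfolding cpow_sum_def by (rule dvd_sum) (simp add: le_imp_power_dvd)

lemma cpow_sum_0_less_add_power:
  assumes "2 \<le> p" "m \<le> i"
  shows "cpow_sum p 0 i < cpow_sum p m i + p ^ m"
proof -
  have "1 \<le> p - 1" using assms(1) by linarith
  then have "p ^ m \<le> (p - 1) * p ^ m" using mult_le_mono1[of 1 "p - 1"] by simp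
  have "(p - 1) * cpow_sum p 0 i + 1 = (p - 1) * cpow_sum p m i + p ^ m"
    using cpow_sum_geometric[of p 0 i] cpow_sum_geometric[of p m i] assms by simp
  also have "\<dots> < (p - 1) * cpow_sum p m i + (p - 1) * p ^ m + 1"
    using \<open>p ^ m \<le> (p - 1) * p ^ m\<close> by linarith
  finally have "(p - 1) * cpow_sum p 0 i < (p - 1) * (cpow_sum p m i + p ^ m)"
    by (simp add: algebra_simps)
  then show ?thesis by (rule mult_less_cancel1[THEN iffD1, THEN conjunct2])
qed

lemma cpow_sum_eq_if_dvd:
  assumes "2 \<le> p" "m \<le> i" "p ^ m dvd d" "cpow_sum p m i \<le> d" "d \<le> cpow_sum p 0 i"
  shows "d = cpow_sum p m i"
proof -
  have "p ^ m dvd d - cpow_sum p m i"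
    using assms(3) power_dvd_cpow_sum by (rule dvd_diff_nat)
  moreover have "d - cpow_sum p m i < p ^ m"
    using cpow_sum_0_less_add_power[OF assms(1,2)] assms(4,5) by linarith
  ultimately have "d - cpow_sum p m i = 0" using nat_dvd_not_less by blast
  then show ?thesis using assms(4) by simp
qed

lemma adm_partition_iff_successively:
  "adm_partition p d ds \<longleftrightarrow>
     ds \<noteq> [] \<and> sum_list ds = d \<and> (\<forall>x\<in>set ds. 0 < x) \<and> successively (\<lambda>x y. p * y \<le> x) ds"
  by (simp add: adm_partition_def successively_conv_nth)

lemma power_le_hd_if_successively:
  fixes p m :: nat
  assumes "successively (\<lambda>x y. p * y \<le> x) ds" "ds \<noteq> []" "\<forall>x\<in>set ds. 0 < x \<and> p ^ m dvd x"
  shows "p ^ (m + length ds - 1) \<le> hd ds"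
  using assms
proof (induction ds)
  case (Cons x xs)
  show ?case
  proof (cases "xs = []")
    case True
    then show ?thesis using Cons.prems(3) by (auto intro: dvd_imp_le)
  next
    case False
    then have "p * hd xs \<le> x" "p * p ^ (m + length xs - 1) \<le> p * hd xs"
      using Cons by (auto simp: successively_Cons)
    moreover have "p ^ (m + length xs) = p * p ^ (m + length xs - 1)"
      using False by (cases xs) auto
    ultimately have "p ^ (m + length xs) \<le> x" by linarith
    then show ?thesis by simp
  qed
qed simp

lemma cpow_sum_le_sum_list_if_successively:
  assumes "successively (\<lambda>x y. p * y \<le> x) ds" "ds \<noteq> []" "\<forall>x\<in>set ds. 0 < x \<and> p ^ m dvd x"
  shows "cpow_sum p m (m + length ds - 1) \<le> sum_list ds"
  using assms
proof (induction ds)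
  case (Cons x xs)
  have x: "p ^ (m + length xs) \<le> x"
    using power_le_hd_if_successively[OF Cons.prems] by simp
  show ?case
  proof (cases "xs = []")
    case True
    then show ?thesis using x by (simp add: cpow_sum_def)
  next
    case False
    then have "cpow_sum p m (m + length xs - 1) \<le> sum_list xs"
      using Cons by (auto simp: successively_Cons)
    moreover have "cpow_sum p m (m + length xs) = cpow_sum p m (m + length xs - 1) + p ^ (m + length xs)"
      using False by (cases xs) (simp_all add: cpow_sum_def)
    ultimately show ?thesis using x by simp
  qed
qed simp

abbreviation partition_value :: "nat \<Rightarrow> nat list \<Rightarrow> nat" where
  "partition_value p ds \<equiv> length ds + Min (multiplicity p ` set ds)"

lemma partition_value_le:
  assumes p: "2 \<le> p" and "adm_partition p d ds" "d \<le> cpow_sum p 0 i"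
  shows "partition_value p ds \<le> Suc i"
    and "partition_value p ds = Suc i \<Longrightarrow> \<exists>j\<le>i. d = cpow_sum p j i"
proof -
  define m where "m = Min (multiplicity p ` set ds)"
  have ds: "ds \<noteq> []" "sum_list ds = d" "\<forall>x\<in>set ds. 0 < x" "successively (\<lambda>x y. p * y \<le> x) ds"
    using assms(2) by (simp_all add: adm_partition_iff_successively)
  have parts: "\<forall>x\<in>set ds. 0 < x \<and> p ^ m dvd x"
    using ds(3) by (auto simp: m_def intro: multiplicity_dvd')
  have "p ^ m dvd sum_list ds"
    using parts by (induction ds) auto
  then have dvd: "p ^ m dvd d" using ds(2) by simp
  have len: "0 < length ds" using ds(1) by simp
  have lower: "cpow_sum p m (m + length ds - 1) \<le> d"
    using cpow_sum_le_sum_list_if_successively[OF ds(4,1) parts] ds(2) by simp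
  have "p ^ (m + length ds - 1) \<le> cpow_sum p m (m + length ds - 1)"
    by (rule power_le_cpow_sum) (use len in linarith)
  also have "\<dots> \<le> cpow_sum p 0 i" using lower assms(3) by (rule order_trans)
  also have "\<dots> < p ^ Suc i" by (rule cpow_sum_less_power[OF p]) simp
  finally have top: "m + length ds - 1 < Suc i"
    by (rule power_less_imp_less_exp[rotated]) (use p in simp)
  show "partition_value p ds \<le> Suc i" using top len by (simp add: m_def)
  show "\<exists>j\<le>i. d = cpow_sum p j i" if "partition_value p ds = Suc i"
  proof -
    have i: "m + length ds - 1 = i" using that len by (simp add: m_def)
    then have "m \<le> i" using len by linarith
    moreover have "cpow_sum p m i \<le> d" using lower i by simp
    ultimately show ?thesis using cpow_sum_eq_if_dvd[OF p _ dvd _ assms(3)] by blast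
  qed
qed

lemma adm_partition_Cons_powers:
  assumes "0 < p" "j \<le> n" "p ^ n \<le> x"
  shows "adm_partition p (x + (\<Sum>k=j..<n. p ^ k)) (x # rev (map (power p) [j..<n]))"
proof -
  let ?ps = "rev (map (power p) [j..<n])"
  have "successively (\<lambda>x y. p * y \<le> x) ?ps"
    by (simp only: successively_rev successively_map) (simp add: successively_conv_nth)
  moreover have "p * hd ?ps \<le> x" if "?ps \<noteq> []"
    using that assms(3) by (cases n) (auto simp: hd_rev)
  moreover have "0 < x" using assms(3) zero_less_power[OF assms(1), of n] by linarith
  ultimately show ?thesis
    using assms(1) by (auto simp: adm_partition_iff_successively successively_Cons
        sum_list_rev interv_sum_list_conv_sum_set_nat)
qed

lemma cpow_sum_eq_power_add: "j \<le> i \<Longrightarrow> cpow_sum p j i = p ^ i + (\<Sum>k=j..<i. p ^ k)"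
  by (simp add: cpow_sum_def atLeastLessThanSuc_atLeastAtMost[symmetric])

lemma adm_partition_cpow_sum:
  assumes "prime p" "j \<le> i"
  obtains ds where "adm_partition p (cpow_sum p j i) ds" and "partition_value p ds = Suc i"
proof
  let ?ds = "p ^ i # rev (map (power p) [j..<i])"
  show "adm_partition p (cpow_sum p j i) ?ds"
    using adm_partition_Cons_powers[of p j i "p ^ i"] assms cpow_sum_eq_power_add
    by (simp add: prime_gt_0_nat)
  have "multiplicity p ` set ?ds = {j..i}"
    using assms by (auto simp: image_image multiplicity_prime_power)
  moreover have "Min {j..i} = j" using assms(2) by (intro Min_eqI) auto
  ultimately show "partition_value p ?ds = Suc i"
    using assms(2) by simp
qed

lemma adm_partition_of_length:
  assumes "0 < p" "1 \<le> i" "cpow_sum p 0 (i - 1) \<le> d"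
  obtains ds where "adm_partition p d ds" and "length ds = i"
proof
  let ?x = "d - (\<Sum>k=0..<i - 1. p ^ k)"
  have "p ^ (i - 1) \<le> ?x"
    using assms(3) cpow_sum_eq_power_add[of 0 "i - 1" p] by simp
  then show "adm_partition p d (?x # rev (map (power p) [0..<i - 1]))"
    using adm_partition_Cons_powers[of p 0 "i - 1" ?x] assms cpow_sum_eq_power_add[of 0 "i - 1" p]
    by simp
  show "length (?x # rev (map (power p) [0..<i - 1])) = i" using assms(2) by simp
qed

lemma tau_eqI:
  assumes "\<And>ds. adm_partition p d ds \<Longrightarrow> partition_value p ds \<le> n"
    and "adm_partition p d ds" and "n \<le> partition_value p ds"
  shows "tau p d = n"
proof -
  let ?values = "{partition_value p ds | ds. adm_partition p d ds}"
  have "?values \<subseteq> {..n}" using assms(1) by auto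
  moreover have "partition_value p ds = n" using assms by (simp add: le_antisym)
  ultimately show ?thesis
    unfolding tau_def using assms(1,2) by (intro Max_eqI) (auto dest: finite_subset)
qed

lemma tau_eq_if_between_cpow_sums:
  assumes "prime p" "1 \<le> i" "cpow_sum p 0 (i - 1) \<le> d" "d \<le> cpow_sum p 0 i"
  shows "tau p d = (if \<exists>j\<le>i. d = cpow_sum p j i then Suc i else i)"
proof (cases "\<exists>j\<le>i. d = cpow_sum p j i")
  case True
  then obtain j where "j \<le> i" "d = cpow_sum p j i" by blast
  then obtain ds where "adm_partition p d ds" "partition_value p ds = Suc i"
    using adm_partition_cpow_sum[OF assms(1)] by blast
  then have "tau p d = Suc i"
    using partition_value_le(1)[OF prime_ge_2_nat[OF assms(1)] _ assms(4)] by (intro tau_eqI) auto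
  with True show ?thesis by simp
next
  case False
  obtain ds where "adm_partition p d ds" "length ds = i"
    using adm_partition_of_length[OF prime_gt_0_nat[OF assms(1)] assms(2,3)] by blast
  moreover have "partition_value p ds' \<le> i" if "adm_partition p d ds'" for ds'
    using partition_value_le[OF prime_ge_2_nat[OF assms(1)] that assms(4)] False by fastforce
  ultimately have "tau p d = i" by (intro tau_eqI) auto
  with False show ?thesis by simp
qed

lemma ceiling_log_cpow_sum:
  assumes "2 \<le> p" "j \<le> i"
  shows "\<lceil>log (real p) (real ((p - 1) * cpow_sum p j i + 1))\<rceil> = int i + 1"
proof (rule ceiling_log_nat_eq_if[OF _ _ assms(1)])
  have "1 * cpow_sum p j i \<le> (p - 1) * cpow_sum p j i"
    using assms(1) by (intro mult_le_mono1) linarith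
  then show "p ^ i < (p - 1) * cpow_sum p j i + 1"
    using power_le_cpow_sum[OF assms(2), of p] by linarith
  have "(p - 1) * cpow_sum p j i + p ^ j = p ^ (i + 1)"
    using cpow_sum_geometric[of p j i] assms by simp
  moreover have "0 < p ^ j" using assms(1) by simp
  ultimately show "(p - 1) * cpow_sum p j i + 1 \<le> p ^ (i + 1)" by linarith
qed

lemma ceiling_log_between_cpow_sums:
  assumes "2 \<le> p" "1 \<le> i" "cpow_sum p 0 (i - 1) \<le> d" "d \<le> cpow_sum p 0 i"
  shows "\<lceil>log (real p) (real ((p - 1) * d + 1))\<rceil> =
    (if d = cpow_sum p 0 (i - 1) then int i else int i + 1)"
proof (cases "d = cpow_sum p 0 (i - 1)")
  case True
  then show ?thesis using ceiling_log_cpow_sum[OF assms(1), of 0 "i - 1"] assms(2) by simp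
next
  case False
  have "(p - 1) * cpow_sum p 0 (i - 1) < (p - 1) * d"
    using False assms(1,3) by simp
  moreover have "(p - 1) * cpow_sum p 0 (i - 1) + 1 = p ^ i"
    using cpow_sum_geometric[of p 0 "i - 1"] assms(1,2) by simp
  ultimately have "p ^ i < (p - 1) * d + 1" by linarith
  moreover have "(p - 1) * d + 1 \<le> p ^ (i + 1)"
  proof -
    have "(p - 1) * d \<le> (p - 1) * cpow_sum p 0 i" using assms(4) by simp
    moreover have "(p - 1) * cpow_sum p 0 i + 1 = p ^ (i + 1)"
      using cpow_sum_geometric[of p 0 i] assms(1) by simp
    ultimately show ?thesis by linarith
  qed
  ultimately have "\<lceil>log (real p) (real ((p - 1) * d + 1))\<rceil> = int i + 1"
    by (rule ceiling_log_nat_eq_if[OF _ _ assms(1)])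
  with False show ?thesis by simp
qed

theorem proposition2p20:
  fixes p d i :: nat
  assumes "prime p" and "0 < d" and "1 \<le> i"
    and "cpow_sum p 0 (i - 1) \<le> d" and "d \<le> cpow_sum p 0 i"
  shows "tau p d = (if \<exists>j\<le>i. d = cpow_sum p j i then i + 1 else i)
    \<and> int (tau p d) =
        (if \<exists>j i'. j \<le> i' \<and> d = cpow_sum p j i'
         then \<lceil>log (real p) (real ((p - 1) * d + 1))\<rceil>
         else \<lceil>log (real p) (real ((p - 1) * d + 1))\<rceil> - 1)"
proof -
  have p: "2 \<le> p" using assms(1) by (rule prime_ge_2_nat)
  have tau: "tau p d = (if \<exists>j\<le>i. d = cpow_sum p j i then i + 1 else i)"
    using tau_eq_if_between_cpow_sums[OF assms(1,3-5)] by simp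
  let ?c = "\<lceil>log (real p) (real ((p - 1) * d + 1))\<rceil>"
  show ?thesis
  proof (cases "\<exists>j\<le>i. d = cpow_sum p j i")
    case True
    then obtain j where "j \<le> i" "d = cpow_sum p j i" by blast
    moreover have "?c = int i + 1" using ceiling_log_cpow_sum[OF p] calculation by simp
    ultimately show ?thesis using tau by auto
  next
    case False
    have c: "?c = (if d = cpow_sum p 0 (i - 1) then int i else int i + 1)"
      by (rule ceiling_log_between_cpow_sums[OF p assms(3-5)])
    have "(\<exists>j i'. j \<le> i' \<and> d = cpow_sum p j i') \<longleftrightarrow> d = cpow_sum p 0 (i - 1)"
    proof
      assume "\<exists>j i'. j \<le> i' \<and> d = cpow_sum p j i'"
      then obtain j i' where "j \<le> i'" "d = cpow_sum p j i'" by blast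
      \<comment> \<open>The ceiling is \<open>i' + 1\<close>; were it \<open>i + 1\<close>, then \<open>d = cpow_sum p j i\<close>.\<close>
      moreover have "?c = int i' + 1" using ceiling_log_cpow_sum[OF p] calculation by simp
      ultimately show "d = cpow_sum p 0 (i - 1)" using c False by (auto split: if_splits)
    qed auto
    then show ?thesis using tau c False by auto
  qed
qed

end
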